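(* Let $0<s\le1$ and let $\beta\in(1,2)$ be such that the $\beta$-expansion of $1$ terminates; fix $m\in\mathbb N$, $\bar p\in[0,1]^{2^m}$ and $\epsilon>0$. Suppose there are a strictly increasing sequence $(M_k)$ of natural numbers and $0\le c<1$ such that $N^s_\infty\big([0,1)\cap G^{\beta,m}_{\bar p}(M_k,\epsilon)\big)<c$ for all $k$. Then for each cylinder $C$ of $f_\beta$ which is a scaling of $[0,1)$ (i.e. if $C$ has generation $n$ then $f_\beta^n$ maps $C$ onto $[0,1)$, so that $C$ is an affine copy of $[0,1)$ of length $\beta^{-n}$), there is $K_C$ such that $N^s_\infty\big(C\cap G^{\beta,m}_{\bar p}(M_k,\epsilon/2)\big)<c|C|^s$ for all $k>K_C$.
   Context: For $\beta\in(1,2)$ let $f_\beta(x)=\beta x \bmod 1$ on $[0,1)$ and $d_n(x,\beta)=\lfloor \beta f_\beta^n(x)\rfloor$, $n\ge0$; $(x_n)_{n\ge0}=(d_n(x,\beta))_{n\ge0}\in\{0,1\}^{\mathbb N}$ is the $\beta$-expansion of $x$. The expansion of $1$ terminates if $d(1,\beta)=j_0\dots j_{k-1}0^\infty$. A cylinder of generation $n$ is a nonempty set $[i_0\cdots i_{n-1}]=\{x\in[0,1): d_k(x,\beta)=i_k,\ 0\le k<n\}$. For a word $w$ of length $m$ and $n>m$, $\tau^\beta_w(x,n)=\#\{i\in\{0,\dots,n-m-1\}: x_i\dots x_{i+m-1}=w\}$; enumerating binary words of length $m$ as $w_1,\dots,w_{2^m}$, $G^{\beta,m}_{\bar p}(n,\epsilon)=\{x\in[0,1):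 p_{w_j}-\epsilon<\tau^\beta_{w_j}(x,n)/(n-m)<p_{w_j}+\epsilon,\ j=1,\dots,2^m\}$. $N^s_\infty(F)=\inf\{\sum_i|C_i|^s: F\subset\bigcup_iC_i\}$, the infimum over countable covers by cylinders of $f_\beta$. *)

theory Defs
  imports "HOL-Analysis.Analysis"
begin

definition fbeta :: "real \<Rightarrow> real \<Rightarrow> real" where
  "fbeta \<beta> x = frac (\<beta> * x)"

definition bdigit :: "real \<Rightarrow> real \<Rightarrow> nat \<Rightarrow> int" where
  "bdigit \<beta> x n = \<lfloor>\<beta> * (fbeta \<beta> ^^ n) x\<rfloor>"

definition expansion_of_one_terminates :: "real \<Rightarrow> bool" where
  "expansion_of_one_terminates \<beta> \<longleftrightarrow> (\<exists>k. \<forall>n\<ge>k. bdigit \<beta> 1 n = 0)"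

definition is_cylinder :: "real \<Rightarrow> nat \<Rightarrow> real set \<Rightarrow> bool" where
  "is_cylinder \<beta> n C \<longleftrightarrow>
     (\<exists>i :: nat \<Rightarrow> int. C = {x \<in> {0..<1}. \<forall>k<n. bdigit \<beta> x k = i k}) \<and> C \<noteq> {}"

definition binary_word :: "nat \<Rightarrow> int list \<Rightarrow> bool" where
  "binary_word m w \<longleftrightarrow> length w = m \<and> set w \<subseteq> {0, 1}"

definition tau :: "real \<Rightarrow> int list \<Rightarrow> real \<Rightarrow> nat \<Rightarrow> nat" where
  "tau \<beta> w x n = card {i. i < n - length w \<and>
       (\<forall>j < length w. bdigit \<beta> x (i + j) = w ! j)}"

definition Gset :: "real \<Rightarrow> nat \<Rightarrow> (int list \<Rightarrow> real) \<Rightarrow> nat \<Rightarrow> real \<Rightarrow> real set" where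
  "Gset \<beta> m p n eps = {x \<in> {0..<1}. \<forall>w. binary_word m w \<longrightarrow>
       (p w - eps < real (tau \<beta> w x n) / (real n - real m) \<and>
        real (tau \<beta> w x n) / (real n - real m) < p w + eps)}"

(* N^s_infinity(F): infimum of sum |C_i|^s over countable covers of F by cylinders
  (finite covers are encoded by padding with empty sets, which contribute 0). *)
definition Ns_inf :: "real \<Rightarrow> real \<Rightarrow> real set \<Rightarrow> ennreal" where
  "Ns_inf \<beta> s F = (INF C \<in> {C :: nat \<Rightarrow> real set.
        (\<forall>i. C i = {} \<or> (\<exists>n. is_cylinder \<beta> n (C i))) \<and> F \<subseteq> (\<Union>i. C i)}.
        (\<Sum>i. ennreal (diameter (C i) powr s)))"

end

theory Submission
  imports Defs
begin

(*
  Let C be a cylinder of generation n on which g = f_beta^n is onto [0,1).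
  On C the map g is affine with slope beta^n, so |C| = beta^(-n) and g multiplies
  diameters of subsets of C by beta^n.  Pulling a cover (D_j) of a set F by cylinders
  back along g gives a cover (C \<inter> g^-1 D_j) of C \<inter> g^-1 F by cylinders whose
  s-weights are those of D_j scaled by |C|^s; hence N^s_inf(F) < r forces
  N^s_inf(C \<inter> g^-1 F) < |C|^s r.  Finally, shifting a digit sequence by n changes each
  word count tau_w(x,N) by at most n, so for N large (n/(N-m) < eps/2) g maps
  C \<inter> G(N, eps/2) into G(N, eps); as M_k \<ge> k this holds for all large k.
*)

lemma bdigit_iterate: "bdigit \<beta> x (n + j) = bdigit \<beta> ((fbeta \<beta> ^^ n) x) j"
  unfolding bdigit_def by (simp add: funpow_add add.commute)

lemma fbeta_iterate_range: "x \<in> {0..<1} \<Longrightarrow> (fbeta \<beta> ^^ n) x \<in> {0..<1}"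
  by (cases n) (auto simp: fbeta_def frac_lt_1)

lemma cylinder_subset_unit: "is_cylinder \<beta> n C \<Longrightarrow> C \<subseteq> {0..<1}"
  unfolding is_cylinder_def by auto

text \<open>The offset with f_beta^n(x) = beta^n x - offset on the cylinder with digits i.\<close>

fun cylinder_offset :: "real \<Rightarrow> (nat \<Rightarrow> int) \<Rightarrow> nat \<Rightarrow> real" where
  "cylinder_offset \<beta> i 0 = 0"
| "cylinder_offset \<beta> i (Suc k) = \<beta> * cylinder_offset \<beta> i k + of_int (i k)"

lemma fbeta_iterate_affine:
  "(\<forall>k<n. bdigit \<beta> x k = i k) \<Longrightarrow> (fbeta \<beta> ^^ n) x = \<beta>^n * x - cylinder_offset \<beta> i n"
proof (induction n)
  case 0
  then show ?case by simp
next
  case (Suc n)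
  have IH: "(fbeta \<beta> ^^ n) x = \<beta>^n * x - cylinder_offset \<beta> i n" using Suc by auto
  have digit: "bdigit \<beta> x n = i n" using Suc.prems by auto
  have "(fbeta \<beta> ^^ Suc n) x = \<beta> * (fbeta \<beta> ^^ n) x - of_int (bdigit \<beta> x n)"
    by (simp add: fbeta_def bdigit_def frac_def)
  also have "\<dots> = \<beta>^Suc n * x - cylinder_offset \<beta> i (Suc n)"
    by (simp only: IH digit) (simp add: algebra_simps)
  finally show ?case .
qed

section \<open>Diameters under similarities\<close>

lemma diameter_similarity_image:
  fixes P :: "real set"
  assumes "bounded P" "bounded (g ` P)" "r > 0"
    and dist: "\<And>x y. x \<in> P \<Longrightarrow> y \<in> P \<Longrightarrow> \<bar>g x - g y\<bar> = r * \<bar>x - y\<bar>"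
  shows "diameter (g ` P) = r * diameter P"
proof (rule antisym)
  show "diameter (g ` P) \<le> r * diameter P"
  proof (rule diameter_le)
    show "g ` P \<noteq> {} \<or> 0 \<le> r * diameter P" using assms diameter_ge_0 by auto
    fix u v assume "u \<in> g ` P" "v \<in> g ` P"
    then obtain x y where "x \<in> P" "y \<in> P" "u = g x" "v = g y" by auto
    then show "norm (u - v) \<le> r * diameter P"
      using dist[of x y] diameter_bounded_bound[OF assms(1), of x y] assms(3)
      by (simp add: dist_real_def)
  qed
  have "diameter P \<le> diameter (g ` P) / r"
  proof (rule diameter_le)
    show "P \<noteq> {} \<or> 0 \<le> diameter (g ` P) / r" using assms diameter_ge_0 by auto
    fix x y assume "x \<in> P" "y \<in> P"
    then have "\<bar>g x - g y\<bar> \<le> diameter (g ` P)"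
      using diameter_bounded_bound[OF assms(2), of "g x" "g y"] by (simp add: dist_real_def)
    then show "norm (x - y) \<le> diameter (g ` P) / r"
      using dist[OF \<open>x \<in> P\<close> \<open>y \<in> P\<close>] assms(3) by (simp add: field_simps)
  qed
  then show "r * diameter P \<le> diameter (g ` P)" using assms(3) by (simp add: field_simps)
qed

lemma diameter_unit_interval: "diameter {0..<1::real} = 1"
  using diameter_closure[of "{0..<1::real}"] by simp

definition full_cylinder :: "real \<Rightarrow> nat \<Rightarrow> real set \<Rightarrow> bool" where
  "full_cylinder \<beta> n C \<longleftrightarrow> is_cylinder \<beta> n C \<and> (fbeta \<beta> ^^ n) ` C = {0..<1}"

lemma cylinder_iterate_expands:
  assumes "is_cylinder \<beta> n C" "x \<in> C" "y \<in> C" "0 < \<beta>"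
  shows "\<bar>(fbeta \<beta> ^^ n) x - (fbeta \<beta> ^^ n) y\<bar> = \<beta>^n * \<bar>x - y\<bar>"
proof -
  obtain i where C: "C = {x \<in> {0..<1}. \<forall>k<n. bdigit \<beta> x k = i k}"
    using assms(1) unfolding is_cylinder_def by blast
  have "(fbeta \<beta> ^^ n) x - (fbeta \<beta> ^^ n) y = \<beta>^n * (x - y)"
    using fbeta_iterate_affine[of n \<beta> x i] fbeta_iterate_affine[of n \<beta> y i] assms(2,3) C
    by (simp add: algebra_simps)
  then show ?thesis using assms(4) by (simp add: abs_mult)
qed

lemma full_cylinder_diameter_image:
  assumes "full_cylinder \<beta> n C" "0 < \<beta>" "P \<subseteq> C"
  shows "diameter ((fbeta \<beta> ^^ n) ` P) = \<beta>^n * diameter P"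
proof (rule diameter_similarity_image)
  have "C \<subseteq> {0..<1}" using assms(1) cylinder_subset_unit unfolding full_cylinder_def by blast
  then have "bounded C" by (rule bounded_subset[rotated]) auto
  then show "bounded P" using assms(3) by (rule bounded_subset)
  have "(fbeta \<beta> ^^ n) ` P \<subseteq> {0..<1}" using assms(1,3) unfolding full_cylinder_def by auto
  then show "bounded ((fbeta \<beta> ^^ n) ` P)" by (rule bounded_subset[rotated]) auto
next
  show "\<And>x y. x \<in> P \<Longrightarrow> y \<in> P \<Longrightarrow>
      \<bar>(fbeta \<beta> ^^ n) x - (fbeta \<beta> ^^ n) y\<bar> = \<beta>^n * \<bar>x - y\<bar>"
    using assms cylinder_iterate_expands unfolding full_cylinder_def by blast
qed (use assms in simp)

lemma full_cylinder_diameter: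
  assumes "full_cylinder \<beta> n C" "0 < \<beta>"
  shows "diameter C = 1 / \<beta>^n"
  using full_cylinder_diameter_image[OF assms order_refl] assms diameter_unit_interval
  unfolding full_cylinder_def by (simp add: field_simps)

section \<open>Pulling cylinders and covers back along a full cylinder\<close>

lemma all_less_add_split:
  "(\<forall>k<(n::nat) + l. P k) \<longleftrightarrow> (\<forall>k<n. P k) \<and> (\<forall>t<l. P (n + t))"
  by (metis add_diff_inverse_nat add_less_cancel_left trans_less_add1)

lemma cylinder_preimage_digits:
  assumes "C = {x \<in> {0..<1}. \<forall>k<n. bdigit \<beta> x k = i k}"
    and "D = {y \<in> {0..<1}. \<forall>t<l. bdigit \<beta> y t = j t}"
  shows "C \<inter> (fbeta \<beta> ^^ n) -` D
       = {x \<in> {0..<1}. \<forall>k<n + l. bdigit \<beta> x k = (if k < n then i k else j (k - n))}"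
proof -
  have "(\<forall>k<n + l. bdigit \<beta> x k = (if k < n then i k else j (k - n)))
      \<longleftrightarrow> (\<forall>k<n. bdigit \<beta> x k = i k) \<and> (\<forall>t<l. bdigit \<beta> ((fbeta \<beta> ^^ n) x) t = j t)" for x
    unfolding all_less_add_split by (simp add: bdigit_iterate)
  then show ?thesis
    unfolding assms(1,2) using fbeta_iterate_range[where \<beta>=\<beta> and n=n] by auto
qed

lemma full_cylinder_preimage:
  assumes C: "full_cylinder \<beta> n C" and D: "is_cylinder \<beta> l D"
  shows "is_cylinder \<beta> (n + l) (C \<inter> (fbeta \<beta> ^^ n) -` D)"
proof -
  obtain i where Ci: "C = {x \<in> {0..<1}. \<forall>k<n. bdigit \<beta> x k = i k}"
    using C unfolding full_cylinder_def is_cylinder_def by blast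
  obtain j where Dj: "D = {y \<in> {0..<1}. \<forall>t<l. bdigit \<beta> y t = j t}" and "D \<noteq> {}"
    using D unfolding is_cylinder_def by blast
  have "D \<subseteq> (fbeta \<beta> ^^ n) ` C" using C Dj unfolding full_cylinder_def by auto
  with \<open>D \<noteq> {}\<close> have "C \<inter> (fbeta \<beta> ^^ n) -` D \<noteq> {}" by blast
  then show ?thesis
    unfolding is_cylinder_def
    by (intro conjI exI[of _ "\<lambda>k. if k < n then i k else j (k - n)"])
       (simp_all only: cylinder_preimage_digits[OF Ci Dj] not_False_eq_True)
qed

lemma full_cylinder_preimage_diameter:
  assumes C: "full_cylinder \<beta> n C" and "0 < \<beta>" and "D \<subseteq> {0..<1}"
  shows "diameter (C \<inter> (fbeta \<beta> ^^ n) -` D) = diameter C * diameter D"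
proof -
  have "D \<subseteq> (fbeta \<beta> ^^ n) ` C"
    using C assms(3) unfolding full_cylinder_def by simp
  then have "(fbeta \<beta> ^^ n) ` (C \<inter> (fbeta \<beta> ^^ n) -` D) = D"
    by auto
  then have "diameter D = \<beta>^n * diameter (C \<inter> (fbeta \<beta> ^^ n) -` D)"
    using full_cylinder_diameter_image[OF C \<open>0 < \<beta>\<close>, of "C \<inter> (fbeta \<beta> ^^ n) -` D"] by simp
  then show ?thesis using full_cylinder_diameter[OF C \<open>0 < \<beta>\<close>] \<open>0 < \<beta>\<close> by (simp add: field_simps)
qed

text \<open>Main scaling estimate: pulling a cover of F back along f_beta^n into a full cylinder C
  multiplies its s-weight by |C|^s, so N^s_inf F < r implies N^s_inf (C \<inter> f_beta^(-n) F) < |C|^s r.\<close>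

lemma full_cylinder_Ns_inf_preimage:
  assumes C: "full_cylinder \<beta> n C" and "0 < \<beta>"
    and less: "Ns_inf \<beta> s F < r"
  shows "Ns_inf \<beta> s (C \<inter> (fbeta \<beta> ^^ n) -` F) < ennreal (diameter C powr s) * r"
proof -
  define g where "g = fbeta \<beta> ^^ n"
  obtain D where Dcyl: "\<forall>j. D j = {} \<or> (\<exists>l. is_cylinder \<beta> l (D j))"
    and Dcov: "F \<subseteq> (\<Union>j. D j)"
    and Dsum: "(\<Sum>j. ennreal (diameter (D j) powr s)) < r"
    using less unfolding Ns_inf_def INF_less_iff by blast
  define P where "P j = C \<inter> g -` D j" for j
  have D_unit: "D j \<subseteq> {0..<1}" for j
    using Dcyl[rule_format, of j] cylinder_subset_unit by (metis empty_subsetI)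
  have Pcyl: "P j = {} \<or> (\<exists>l. is_cylinder \<beta> l (P j))" for j
  proof (cases "D j = {}")
    case False
    then obtain l where "is_cylinder \<beta> l (D j)" using Dcyl by blast
    then show ?thesis using full_cylinder_preimage[OF C] unfolding P_def g_def by blast
  qed (simp add: P_def)
  have Pcov: "C \<inter> g -` F \<subseteq> (\<Union>j. P j)"
    using Dcov unfolding P_def by blast
  have diamC: "diameter C > 0"
    using full_cylinder_diameter[OF C \<open>0 < \<beta>\<close>] \<open>0 < \<beta>\<close> by simp
  have weight: "ennreal (diameter (P j) powr s)
      = ennreal (diameter C powr s) * ennreal (diameter (D j) powr s)" for j
  proof -
    have "diameter (P j) = diameter C * diameter (D j)"
      unfolding P_def g_def by (rule full_cylinder_preimage_diameter[OF C \<open>0 < \<beta>\<close> D_unit])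
    moreover have "0 \<le> diameter (D j)"
      by (rule diameter_ge_0, rule bounded_subset[OF _ D_unit]) auto
    ultimately show ?thesis using diamC by (simp add: powr_mult ennreal_mult)
  qed
  have "Ns_inf \<beta> s (C \<inter> g -` F) \<le> (\<Sum>j. ennreal (diameter (P j) powr s))"
    unfolding Ns_inf_def by (rule INF_lower) (simp add: Pcyl Pcov)
  also have "\<dots> = ennreal (diameter C powr s) * (\<Sum>j. ennreal (diameter (D j) powr s))"
    by (simp only: weight ennreal_suminf_cmult)
  also have "\<dots> < ennreal (diameter C powr s) * r"
    by (rule ennreal_mult_strict_left_mono[OF Dsum]) (use diamC in auto)
  finally show ?thesis unfolding g_def .
qed

text \<open>Every cover of a set covers its subsets.\<close>

lemma Ns_inf_mono: "A \<subseteq> B \<Longrightarrow> Ns_inf \<beta> s A \<le> Ns_inf \<beta> s B"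
  unfolding Ns_inf_def by (rule INF_superset_mono) auto

section \<open>Word frequencies along the orbit\<close>

lemma card_less_shift:
  fixes L n :: nat
  shows "card {i. i < L \<and> Q i} \<le> card {i. i < L \<and> Q (n + i)} + n"
    and "card {i. i < L \<and> Q (n + i)} \<le> card {i. i < L \<and> Q i} + n"
proof -
  let ?S = "{i. i < L \<and> Q i}" and ?T = "{i. i < L \<and> Q (n + i)}"
  have "?S \<subseteq> (\<lambda>i. n + i) ` ?T \<union> {..<n}"
  proof
    fix i assume "i \<in> ?S"
    then show "i \<in> (\<lambda>i. n + i) ` ?T \<union> {..<n}"
      by (cases "i < n") (auto intro!: image_eqI[of _ _ "i - n"])
  qed
  then have "card ?S \<le> card ((\<lambda>i. n + i) ` ?T \<union> {..<n})"
    by (intro card_mono) auto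
  also have "\<dots> \<le> card ((\<lambda>i. n + i) ` ?T) + card {..<n}"
    by (rule card_Un_le)
  also have "\<dots> \<le> card ?T + n" using card_image_le[of ?T "\<lambda>i. n + i"] by simp
  finally show "card ?S \<le> card ?T + n" .
  have "card ?T = card ((\<lambda>i. n + i) ` ?T)" by (simp add: card_image)
  also have "\<dots> \<le> card (?S \<union> {L..<L + n})" by (intro card_mono) auto
  also have "\<dots> \<le> card ?S + n" using card_Un_le[of ?S "{L..<L + n}"] by simp
  finally show "card ?T \<le> card ?S + n" .
qed

lemma tau_iterate:
  "\<bar>real (tau \<beta> w ((fbeta \<beta> ^^ n) x) N) - real (tau \<beta> w x N)\<bar> \<le> real n"
proof -
  define Q where "Q i \<longleftrightarrow> (\<forall>j < length w. bdigit \<beta> x (i + j) = w ! j)" for i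
  have "tau \<beta> w x N = card {i. i < N - length w \<and> Q i}"
    unfolding tau_def Q_def ..
  moreover have "tau \<beta> w ((fbeta \<beta> ^^ n) x) N = card {i. i < N - length w \<and> Q (n + i)}"
    unfolding tau_def Q_def by (simp add: bdigit_iterate[symmetric] add.assoc)
  ultimately show ?thesis using card_less_shift[of "N - length w" Q n] by linarith
qed

lemma Gset_subset_unit: "Gset \<beta> m p N eps \<subseteq> {0..<1}"
  unfolding Gset_def by blast

lemma Gset_iterate:
  assumes x: "x \<in> Gset \<beta> m p N eps" and "m < N"
    and shift: "real n \<le> \<delta> * (real N - real m)"
  shows "(fbeta \<beta> ^^ n) x \<in> Gset \<beta> m p N (eps + \<delta>)"
proof -
  define D where "D = real N - real m"
  have "D > 0" using \<open>m < N\<close> by (simp add: D_def)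
  have close: "\<bar>a / D - b / D\<bar> \<le> \<delta>" if "\<bar>a - b\<bar> \<le> real n" for a b
  proof -
    have "\<bar>a / D - b / D\<bar> = \<bar>a - b\<bar> / D"
      using \<open>D > 0\<close> by (metis abs_divide abs_of_pos diff_divide_distrib)
    also have "\<dots> \<le> \<delta>"
      using that shift \<open>D > 0\<close> by (simp add: D_def divide_le_eq)
    finally show ?thesis .
  qed
  have "p w - (eps + \<delta>) < real (tau \<beta> w ((fbeta \<beta> ^^ n) x) N) / D \<and>
        real (tau \<beta> w ((fbeta \<beta> ^^ n) x) N) / D < p w + (eps + \<delta>)"
    if "binary_word m w" for w
  proof -
    have "p w - eps < real (tau \<beta> w x N) / D \<and> real (tau \<beta> w x N) / D < p w + eps"
      using x that unfolding Gset_def D_def by blast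
    moreover have "\<bar>real (tau \<beta> w ((fbeta \<beta> ^^ n) x) N) / D - real (tau \<beta> w x N) / D\<bar> \<le> \<delta>"
      by (rule close[OF tau_iterate])
    ultimately show ?thesis by linarith
  qed
  moreover have "(fbeta \<beta> ^^ n) x \<in> {0..<1}"
    using x Gset_subset_unit fbeta_iterate_range by blast
  ultimately show ?thesis unfolding Gset_def mem_Collect_eq D_def[symmetric] by blast
qed

lemma Gset_iterate_eventually:
  assumes "0 < eps"
  obtains K where "\<And>N x. K < N \<Longrightarrow> x \<in> Gset \<beta> m p N (eps / 2) \<Longrightarrow>
      (fbeta \<beta> ^^ n) x \<in> Gset \<beta> m p N eps"
proof -
  obtain K :: nat where K: "real m + 2 * real n / eps < real K"
    using reals_Archimedean2 by blast
  have "(fbeta \<beta> ^^ n) x \<in> Gset \<beta> m p N eps"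
    if "K < N" "x \<in> Gset \<beta> m p N (eps / 2)" for N x
  proof -
    have large: "2 * real n / eps < real N - real m" using K \<open>K < N\<close> by linarith
    have "0 \<le> 2 * real n / eps" using \<open>0 < eps\<close> by simp
    with large have "m < N" by linarith
    from large have "2 * real n < (real N - real m) * eps"
      using \<open>0 < eps\<close> by (simp add: pos_divide_less_eq)
    then have "real n \<le> eps / 2 * (real N - real m)" by (simp add: algebra_simps)
    from Gset_iterate[OF \<open>x \<in> Gset \<beta> m p N (eps / 2)\<close> \<open>m < N\<close> this] show ?thesis by simp
  qed
  then show ?thesis using that by blast
qed

theorem mainTheorem14:
  fixes s \<beta> eps c :: real and m :: nat and p :: "int list \<Rightarrow> real" and M :: "nat \<Rightarrow> nat"
  assumes "0 < s" and "s \<le> 1"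
    and "1 < \<beta>" and "\<beta> < 2"
    and "expansion_of_one_terminates \<beta>"
    and "\<forall>w. binary_word m w \<longrightarrow> p w \<in> {0..1}"
    and "0 < eps"
    and "strict_mono M"
    and "0 \<le> c" and "c < 1"
    and "\<forall>k. Ns_inf \<beta> s ({0..<1} \<inter> Gset \<beta> m p (M k) eps) < ennreal c"
  shows "\<forall>C n. is_cylinder \<beta> n C \<and> (fbeta \<beta> ^^ n) ` C = {0..<1} \<longrightarrow>
           (\<exists>K. \<forall>k>K. Ns_inf \<beta> s (C \<inter> Gset \<beta> m p (M k) (eps / 2))
                        < ennreal (c * diameter C powr s))"
proof (intro allI impI)
  fix C n assume "is_cylinder \<beta> n C \<and> (fbeta \<beta> ^^ n) ` C = {0..<1}"
  then have C: "full_cylinder \<beta> n C" unfolding full_cylinder_def .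
  obtain K where K: "\<And>N x. K < N \<Longrightarrow> x \<in> Gset \<beta> m p N (eps / 2) \<Longrightarrow>
      (fbeta \<beta> ^^ n) x \<in> Gset \<beta> m p N eps"
    using Gset_iterate_eventually[OF \<open>0 < eps\<close>] by blast
  have "Ns_inf \<beta> s (C \<inter> Gset \<beta> m p (M k) (eps / 2)) < ennreal (c * diameter C powr s)"
    if "K < k" for k
  proof -
    have "K < M k" using seq_suble[OF \<open>strict_mono M\<close>, of k] \<open>K < k\<close> by linarith
    then have "C \<inter> Gset \<beta> m p (M k) (eps / 2) \<subseteq> C \<inter> (fbeta \<beta> ^^ n) -` Gset \<beta> m p (M k) eps"
      using K by blast
    then have "Ns_inf \<beta> s (C \<inter> Gset \<beta> m p (M k) (eps / 2))
        \<le> Ns_inf \<beta> s (C \<inter> (fbeta \<beta> ^^ n) -` Gset \<beta> m p (M k) eps)"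
      by (rule Ns_inf_mono)
    also have "\<dots> < ennreal (diameter C powr s) * ennreal c"
      using \<open>1 < \<beta>\<close> assms(11) Int_absorb1[OF Gset_subset_unit]
      by (intro full_cylinder_Ns_inf_preimage[OF C]) auto
    also have "\<dots> = ennreal (c * diameter C powr s)"
      using \<open>0 \<le> c\<close> by (simp add: ennreal_mult mult.commute)
    finally show ?thesis .
  qed
  then show "\<exists>K. \<forall>k>K. Ns_inf \<beta> s (C \<inter> Gset \<beta> m p (M k) (eps / 2))
                   < ennreal (c * diameter C powr s)" by blast
qed

end
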